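(* Let $\gamma=(\gamma_1,\dots,\gamma_b)$ be a parallel map on $V=V_1\oplus\cdots\oplus V_b$, $V_i\cong(\mathbb F_2)^m$, with $0\gamma=0$. Suppose every $\gamma_i$ is differentially $2^r$-uniform with $r<m-1$ and strongly $r$-anti-invariant. If $\gamma$ maps $\mathcal{LA}_U(W_1|W_2)$ onto a non-trivial partition $\mathcal L(W)$, then $W_1$, $W_2$, $W$ are walls and $W_1=W_2=W$; in particular $\mathcal{LA}_U(W_1|W_2)$ is linear.
   Context: Let $m,b>1$, $n=mb$, $V=(\mathbb F_2)^n=V_1\oplus\cdots\oplus V_b$, $V_i\cong(\mathbb F_2)^m$. Permutations act on the right. A parallel map is $\gamma\in\mathrm{Sym}(V)$ with $(v_1\oplus\cdots\oplus v_b)\gamma=v_1\gamma_1\oplus\cdots\oplus v_b\gamma_b$, $\gamma_i\in\mathrm{Sym}(V_i)$. A wall is $\bigoplus_{i\in I}V_i$ with $\emptyset\ne I\subsetneq\{1,\dots,b\}$. $f:(\mathbb F_2)^m\to(\mathbb F_2)^m$ is differentially $\delta$-uniform if $\delta=\max_{a\ne0,b}|\{x:f(x+a)+f(x)=b\}|$; for $f(0)=0$ and $1\le r<m$, $f$ is strongly $r$-anti-invariant if for all subspaces $U',W'$ with $f(U')=W'$, either $\dim U'=\dim W'<m-r$ or $U'=W'=(\mathbb F_2)^m$. A permutation maps $\mathcal A$ onto $\mathcal B$ if it sends the blocks of $\mathcal A$ exactly onto those of $\mathcal B$; trivial partitions are the singleton partition and $\{V\}$. $\mathcal L(W)=\{W+v:v\in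 V\}$. For a subspace $U$ of dimension $n-1$ and subspaces $W_1,W_2\subseteq U$, $\mathcal{LA}_U(W_1|W_2)=\{W_1+v:v\in U\}\cup\{(W_2+\bar v)+v:v\in U\}$ for any $\bar v\in V\setminus U$. *)

theory Defs
  imports Main
begin

text \<open>Vectors over F_2 are represented as boolean-valued functions; addition is pointwise xor.
  (F_2)^m is represented by functions nat => bool vanishing at indices >= m.
  V = V_1 + ... + V_b is represented by functions on pairs (i,j) (block i < b, coordinate j < m),
  vanishing outside; the block component of v in V_i is (%j. v (i,j)).  Blocks are indexed 0..b-1.\<close>

definition xadd :: "('a \<Rightarrow> bool) \<Rightarrow> ('a \<Rightarrow> bool) \<Rightarrow> ('a \<Rightarrow> bool)" where
  "xadd x y = (\<lambda>k. x k \<noteq> y k)"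

definition xzero :: "'a \<Rightarrow> bool" where
  "xzero = (\<lambda>_. False)"

definition Fm :: "nat \<Rightarrow> (nat \<Rightarrow> bool) set" where
  "Fm m = {y. \<forall>j. m \<le> j \<longrightarrow> \<not> y j}"

definition Vsp :: "nat \<Rightarrow> nat \<Rightarrow> (nat \<times> nat \<Rightarrow> bool) set" where
  "Vsp m b = {v. \<forall>i j. (b \<le> i \<or> m \<le> j) \<longrightarrow> \<not> v (i, j)}"

text \<open>Subspaces of an ambient F_2-space S (closure under addition suffices over F_2).\<close>
definition is_subspace :: "('a \<Rightarrow> bool) set \<Rightarrow> ('a \<Rightarrow> bool) set \<Rightarrow> bool" where
  "is_subspace S U \<longleftrightarrow> U \<subseteq> S \<and> xzero \<in> U \<and> (\<forall>x\<in>U. \<forall>y\<in>U. xadd x y \<in> U)"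

definition sdim :: "('a \<Rightarrow> bool) set \<Rightarrow> nat" where
  "sdim U = (THE d. card U = 2 ^ d)"

definition parmap :: "nat \<Rightarrow> nat \<Rightarrow> (nat \<Rightarrow> (nat \<Rightarrow> bool) \<Rightarrow> (nat \<Rightarrow> bool))
    \<Rightarrow> (nat \<times> nat \<Rightarrow> bool) \<Rightarrow> (nat \<times> nat \<Rightarrow> bool)" where
  "parmap m b g v = (\<lambda>(i, j). if i < b \<and> j < m then g i (\<lambda>j'. v (i, j')) j else False)"

definition diff_uniform :: "nat \<Rightarrow> ((nat \<Rightarrow> bool) \<Rightarrow> (nat \<Rightarrow> bool)) \<Rightarrow> nat \<Rightarrow> bool" where
  "diff_uniform m f \<delta> \<longleftrightarrow>
     \<delta> = Max {card {x \<in> Fm m. xadd (f (xadd x a)) (f x) = c} | a c.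
                a \<in> Fm m \<and> a \<noteq> xzero \<and> c \<in> Fm m}"

definition strongly_anti_invariant :: "nat \<Rightarrow> ((nat \<Rightarrow> bool) \<Rightarrow> (nat \<Rightarrow> bool)) \<Rightarrow> nat \<Rightarrow> bool" where
  "strongly_anti_invariant m f r \<longleftrightarrow>
     f xzero = xzero \<and> 1 \<le> r \<and> r < m \<and>
     (\<forall>U' W'. is_subspace (Fm m) U' \<and> is_subspace (Fm m) W' \<and> f ` U' = W' \<longrightarrow>
        (sdim U' = sdim W' \<and> sdim W' < m - r) \<or> (U' = Fm m \<and> W' = Fm m))"

definition wall :: "nat \<Rightarrow> nat \<Rightarrow> (nat \<times> nat \<Rightarrow> bool) set \<Rightarrow> bool" where
  "wall m b W \<longleftrightarrow> (\<exists>I. I \<noteq> {} \<and> I \<subset> {..<b} \<and>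
       W = {v \<in> Vsp m b. \<forall>i j. i \<notin> I \<longrightarrow> \<not> v (i, j)})"

definition coset :: "('a \<Rightarrow> bool) set \<Rightarrow> ('a \<Rightarrow> bool) \<Rightarrow> ('a \<Rightarrow> bool) set" where
  "coset W v = (\<lambda>w. xadd w v) ` W"

definition Lpart :: "nat \<Rightarrow> nat \<Rightarrow> (nat \<times> nat \<Rightarrow> bool) set \<Rightarrow> (nat \<times> nat \<Rightarrow> bool) set set" where
  "Lpart m b W = {coset W v | v. v \<in> Vsp m b}"

definition LA :: "nat \<Rightarrow> nat \<Rightarrow> (nat \<times> nat \<Rightarrow> bool) set \<Rightarrow> (nat \<times> nat \<Rightarrow> bool) set
    \<Rightarrow> (nat \<times> nat \<Rightarrow> bool) set \<Rightarrow> (nat \<times> nat \<Rightarrow> bool) set set" where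
  "LA m b U W1 W2 = (let vbar = (SOME x. x \<in> Vsp m b - U) in
      {coset W1 v | v. v \<in> U} \<union> {coset (coset W2 vbar) v | v. v \<in> U})"

definition maps_onto :: "('a \<Rightarrow> 'a) \<Rightarrow> 'a set set \<Rightarrow> 'a set set \<Rightarrow> bool" where
  "maps_onto f A B \<longleftrightarrow> (\<lambda>X. f ` X) ` A = B"

end

theory Submission
  imports Defs
begin

(* Over F_2 the blocks of LA_U(W1|W2) are cosets, so gamma maps W1 onto W, and
   gamma(u) + gamma(u + a) lies in W whenever u and u + a lie in a common block.
   Fix a block index i in which some a in W1 is nonzero.  Letting u run through the slice
   U /\ V_i, which has at least 2^(m-1) elements since U is a hyperplane, differential
   2^r-uniformity of gamma_i shows that W /\ V_i has at least 2^(m-1-r) elements; hence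
   W /\ V_i, and with it its preimage W1 /\ V_i under gamma_i, is nonzero.  Repeating the
   count with a nonzero direction z in W1 /\ V_i, the derivative values
   gamma_i(y + z) + gamma_i(y) are nonzero elements of W /\ V_i, which pushes its dimension
   to at least m - r; strong r-anti-invariance of gamma_i then forces W1 /\ V_i = V_i.
   So W1 is the wall spanned by the blocks it meets.  gamma preserves walls, so W = W1;
   comparing gamma(vbar) and gamma(vbar + a) blockwise puts W2 into the same wall, and
   cardinalities give W2 = W1.  The wall is proper because W1 lies in U, and since U has
   index 2 the partition LA_U(W1|W1) is L(W1). *)

lemma xadd_assoc: "xadd (xadd x y) z = xadd x (xadd y z)"
  by (auto simp: xadd_def fun_eq_iff)

lemma xadd_self [simp]: "xadd x x = xzero"
  by (auto simp: xadd_def xzero_def fun_eq_iff)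

lemma xadd_xzero [simp]: "xadd x xzero = x" "xadd xzero x = x"
  by (auto simp: xadd_def xzero_def fun_eq_iff)

lemma xadd_cancel [simp]:
  "xadd (xadd x y) y = x" "xadd x (xadd x y) = y" "xadd (xadd y x) y = x" "xadd x (xadd y x) = y"
  by (auto simp: xadd_def fun_eq_iff)

lemma xadd_eq_xzero_iff: "xadd x y = xzero \<longleftrightarrow> x = y"
  by (auto simp: xadd_def xzero_def fun_eq_iff)

lemma xadd_eq_left_iff: "xadd x y = x \<longleftrightarrow> y = xzero"
  by (auto simp: xadd_def xzero_def fun_eq_iff)

lemma xadd_left_cancel [simp]: "xadd x y = xadd x z \<longleftrightarrow> y = z"
  by (auto simp: xadd_def fun_eq_iff)

lemma xadd_right_cancel [simp]: "xadd y x = xadd z x \<longleftrightarrow> y = z"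
  by (auto simp: xadd_def fun_eq_iff)

lemma is_subspaceD:
  assumes "is_subspace S U"
  shows "U \<subseteq> S" "xzero \<in> U" "x \<in> U \<Longrightarrow> y \<in> U \<Longrightarrow> xadd x y \<in> U"
  using assms by (auto simp: is_subspace_def)

lemma is_subspace_finite: "is_subspace S U \<Longrightarrow> finite S \<Longrightarrow> finite U"
  using finite_subset is_subspaceD(1) by blast

definition supp_set :: "'a set \<Rightarrow> ('a \<Rightarrow> bool) set" where
  "supp_set K = {v. \<forall>k. k \<notin> K \<longrightarrow> \<not> v k}"

lemma Fm_eq_supp_set: "Fm m = supp_set {..<m}"
  by (auto simp: Fm_def supp_set_def)

lemma Vsp_eq_supp_set: "Vsp m b = supp_set ({..<b} \<times> {..<m})"
  by (auto simp: Vsp_def supp_set_def)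

lemma bij_betw_Pow_supp_set: "bij_betw (\<lambda>A k. k \<in> A) (Pow K) (supp_set K)"
  by (rule bij_betw_byWitness[where f'="\<lambda>v. {k. v k}"]) (auto simp: supp_set_def)

lemma finite_supp_set: "finite K \<Longrightarrow> finite (supp_set K)"
  using bij_betw_finite[OF bij_betw_Pow_supp_set, of K] by simp

lemma card_supp_set: "finite K \<Longrightarrow> card (supp_set K) = 2 ^ card K"
  using bij_betw_same_card[OF bij_betw_Pow_supp_set] card_Pow by metis

lemma finite_Fm: "finite (Fm m)" and card_Fm: "card (Fm m) = 2 ^ m"
  by (simp_all add: Fm_eq_supp_set finite_supp_set card_supp_set)

lemma finite_Vsp: "finite (Vsp m b)" and card_Vsp: "card (Vsp m b) = 2 ^ (m * b)"
  by (simp_all add: Vsp_eq_supp_set finite_supp_set card_supp_set card_cartesian_product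
      mult.commute)

lemma xadd_Fm: "x \<in> Fm m \<Longrightarrow> y \<in> Fm m \<Longrightarrow> xadd x y \<in> Fm m"
  by (auto simp: Fm_def xadd_def)

lemma xzero_Fm [simp]: "xzero \<in> Fm m"
  by (auto simp: Fm_def xzero_def)

lemma xadd_Vsp: "x \<in> Vsp m b \<Longrightarrow> y \<in> Vsp m b \<Longrightarrow> xadd x y \<in> Vsp m b"
  by (auto simp: Vsp_def xadd_def)

lemma xzero_Vsp [simp]: "xzero \<in> Vsp m b"
  by (auto simp: Vsp_def xzero_def)

lemma is_subspace_Vsp: "is_subspace (Vsp m b) (Vsp m b)"
  by (simp add: is_subspace_def xadd_Vsp)

lemma card_subspace_split:
  assumes S: "is_subspace A S" "finite S" and s0: "s0 \<in> S" "s0 k"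
  shows "card S = 2 * card {s \<in> S. \<not> s k}"
proof -
  define S' where "S' = {s \<in> S. \<not> s k}"
  have shift_mem: "xadd s s0 \<in> S" if "s \<in> S" for s
    using is_subspaceD(3)[OF S(1) that s0(1)] .
  have "S = S' \<union> (\<lambda>s. xadd s s0) ` S'"
  proof (intro set_eqI iffI)
    fix x assume x: "x \<in> S"
    show "x \<in> S' \<union> (\<lambda>s. xadd s s0) ` S'"
    proof (cases "x k")
      case True
      then have "xadd x s0 \<in> S'"
        using x s0(2) shift_mem by (simp add: S'_def xadd_def)
      then show ?thesis
        by (intro UnI2 image_eqI[where x="xadd x s0"]) simp_all
    qed (use x in \<open>simp add: S'_def\<close>)
  next
    fix x assume "x \<in> S' \<union> (\<lambda>s. xadd s s0) ` S'"
    then show "x \<in> S"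
      using shift_mem by (auto simp: S'_def)
  qed
  moreover have "S' \<inter> (\<lambda>s. xadd s s0) ` S' = {}"
    using s0(2) by (auto simp: S'_def xadd_def)
  moreover have "card ((\<lambda>s. xadd s s0) ` S') = card S'"
    by (rule card_image) (simp add: inj_on_def)
  moreover have "finite S'"
    using S(2) by (simp add: S'_def)
  ultimately show ?thesis
    unfolding S'_def[symmetric] by (metis card_Un_disjoint finite_imageI mult_2)
qed

lemma card_subspace_supp_set_ex_power:
  assumes "finite K" "is_subspace (supp_set K) S"
  shows "\<exists>d. card S = 2 ^ d"
  using assms
proof (induction K arbitrary: S rule: finite_induct)
  case empty
  then have "S = {xzero}"
    by (auto simp: is_subspace_def supp_set_def xzero_def)
  then show ?case by (intro exI[of _ 0]) simp
next
  case (insert k K)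
  define S' where "S' = {s \<in> S. \<not> s k}"
  have "is_subspace (supp_set K) S'"
    using insert.prems by (auto simp: is_subspace_def supp_set_def S'_def xzero_def xadd_def)
  then obtain d where d: "card S' = 2 ^ d"
    using insert.IH by blast
  show ?case
  proof (cases "\<exists>s0\<in>S. s0 k")
    case True
    have "finite S"
      using insert.prems insert.hyps(1) is_subspace_finite finite_supp_set by blast
    then have "card S = 2 ^ Suc d"
      using True card_subspace_split[OF insert.prems] d by (auto simp: S'_def)
    then show ?thesis ..
  next
    case False
    then have "S = S'" by (auto simp: S'_def)
    then show ?thesis using d by blast
  qed
qed

lemma sdim_eqI: "card S = 2 ^ d \<Longrightarrow> sdim S = d"
  unfolding sdim_def by (rule the_equality) auto

lemma card_subspace_supp_set:
  "finite K \<Longrightarrow> is_subspace (supp_set K) S \<Longrightarrow> card S = 2 ^ sdim S"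
  using card_subspace_supp_set_ex_power sdim_eqI by metis

lemma card_subspace_Fm: "is_subspace (Fm m) S \<Longrightarrow> card S = 2 ^ sdim S"
  using card_subspace_supp_set[of "{..<m}" S] by (simp add: Fm_eq_supp_set)

lemma card_subspace_Vsp: "is_subspace (Vsp m b) S \<Longrightarrow> card S = 2 ^ sdim S"
  using card_subspace_supp_set[of "{..<b} \<times> {..<m}" S] by (simp add: Vsp_eq_supp_set)

lemma mem_coset_iff: "z \<in> coset W v \<longleftrightarrow> xadd z v \<in> W"
  unfolding coset_def by (auto intro: image_eqI[where x="xadd z v"])

lemma card_coset: "card (coset W v) = card W"
  unfolding coset_def by (rule card_image) (simp add: inj_on_def)

lemma coset_xzero [simp]: "coset W xzero = W"
  unfolding coset_def by simp

lemma coset_coset: "coset (coset W x) y = coset W (xadd x y)"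
  unfolding coset_def image_image by (simp add: xadd_assoc)

lemma xadd_mem_coset:
  assumes "is_subspace S W" "x \<in> coset W v" "y \<in> coset W v"
  shows "xadd x y \<in> W"
proof -
  have "xadd (xadd x v) (xadd y v) \<in> W"
    using assms is_subspaceD(3) by (simp add: mem_coset_iff)
  moreover have "xadd (xadd x v) (xadd y v) = xadd x y"
    by (auto simp: xadd_def fun_eq_iff)
  ultimately show ?thesis by simp
qed

lemma coset_of_mem:
  assumes "is_subspace S W" "v \<in> W"
  shows "coset W v = W"
proof (intro set_eqI iffI)
  fix z assume "z \<in> coset W v"
  then have "xadd (xadd z v) v \<in> W"
    unfolding mem_coset_iff using assms(2) by (rule is_subspaceD(3)[OF assms(1)])
  then show "z \<in> W" by simp
next
  fix z assume "z \<in> W"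
  then show "z \<in> coset W v"
    using assms is_subspaceD(3) by (simp add: mem_coset_iff)
qed

lemma xadd_mem_index_two_subspace:
  assumes A: "is_subspace S A" "finite A" and U: "is_subspace S U" "U \<subseteq> A"
    and card: "card A = 2 * card U"
    and x: "x \<in> A - U" and y: "y \<in> A - U"
  shows "xadd x y \<in> U"
proof -
  have "(\<lambda>u. xadd x u) ` U \<subseteq> A - U"
  proof
    fix z assume "z \<in> (\<lambda>u. xadd x u) ` U"
    then obtain u where u: "u \<in> U" "z = xadd x u" by auto
    have "xadd z u \<notin> U"
      using u x by (simp add: xadd_assoc)
    then have "z \<notin> U"
      using u(1) is_subspaceD(3)[OF U(1)] by blast
    then show "z \<in> A - U"
      using u x U(2) is_subspaceD(3)[OF A(1)] by blast
  qed
  moreover have "card ((\<lambda>u. xadd x u) ` U) = card (A - U)"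
    using card card_Diff_subset[OF finite_subset[OF U(2) A(2)] U(2)]
    by (simp add: card_image inj_on_def)
  ultimately have "(\<lambda>u. xadd x u) ` U = A - U"
    using A(2) by (simp add: card_subset_eq)
  then obtain u where "u \<in> U" "y = xadd x u"
    using y by blast
  then show ?thesis by simp
qed

lemma card_le_mult_card_image:
  assumes "finite A" "\<And>c. c \<in> f ` A \<Longrightarrow> card {x \<in> A. f x = c} \<le> k"
  shows "card A \<le> k * card (f ` A)"
proof -
  have "card A = card (\<Union>c\<in>f ` A. {x \<in> A. f x = c})"
    by (rule arg_cong[where f=card]) auto
  also have "\<dots> \<le> (\<Sum>c\<in>f ` A. card {x \<in> A. f x = c})"
    using assms(1) by (intro card_UN_le) simp
  also have "\<dots> \<le> (\<Sum>c\<in>f ` A. k)"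
    using assms(2) by (rule sum_mono)
  finally show ?thesis by (simp add: mult.commute)
qed

lemma diff_uniformD:
  assumes "diff_uniform m f \<delta>" "a \<in> Fm m" "a \<noteq> xzero" "c \<in> Fm m"
  shows "card {x \<in> Fm m. xadd (f (xadd x a)) (f x) = c} \<le> \<delta>"
proof -
  define M where "M = {card {x \<in> Fm m. xadd (f (xadd x a)) (f x) = c} | a c.
    a \<in> Fm m \<and> a \<noteq> xzero \<and> c \<in> Fm m}"
  have "M \<subseteq> {..card (Fm m)}"
    unfolding M_def using finite_Fm by (auto intro!: card_mono)
  then have "finite M"
    using finite_subset by blast
  moreover have "card {x \<in> Fm m. xadd (f (xadd x a)) (f x) = c} \<in> M"
    unfolding M_def using assms(2-4) by blast
  ultimately show ?thesis
    using assms(1) Max_ge unfolding diff_uniform_def M_def by blast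
qed

lemma diff_uniform_card_image_derivative:
  assumes du: "diff_uniform m f \<delta>" and f: "f ` Fm m \<subseteq> Fm m"
    and a: "a \<in> Fm m" "a \<noteq> xzero" and A: "A \<subseteq> Fm m"
  shows "card A \<le> \<delta> * card ((\<lambda>y. xadd (f (xadd y a)) (f y)) ` A)"
proof (rule card_le_mult_card_image)
  show "finite A"
    using A finite_Fm finite_subset by blast
next
  fix c assume "c \<in> (\<lambda>y. xadd (f (xadd y a)) (f y)) ` A"
  then obtain y where y: "y \<in> A" "c = xadd (f (xadd y a)) (f y)"
    by blast
  then have c: "c \<in> Fm m"
    using A f a(1) by (auto intro!: xadd_Fm)
  have "card {x \<in> A. xadd (f (xadd x a)) (f x) = c}
      \<le> card {x \<in> Fm m. xadd (f (xadd x a)) (f x) = c}"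
    using A finite_Fm by (intro card_mono) auto
  also have "\<dots> \<le> \<delta>"
    using diff_uniformD[OF du a c] .
  finally show "card {x \<in> A. xadd (f (xadd x a)) (f x) = c} \<le> \<delta>" .
qed

lemma strongly_anti_invariant_full:
  assumes "strongly_anti_invariant m f r" "is_subspace (Fm m) U'" "is_subspace (Fm m) W'"
    and "f ` U' = W'" and "2 ^ m \<le> 2 ^ r * card W'"
  shows "U' = Fm m"
proof -
  have "(2::nat) ^ m \<le> 2 ^ (r + sdim W')"
    using assms(5) card_subspace_Fm[OF assms(3)] by (simp add: power_add)
  then have "\<not> sdim W' < m - r"
    by simp
  then show ?thesis
    using assms(1-4) unfolding strongly_anti_invariant_def by blast
qed

definition block :: "(nat \<times> nat \<Rightarrow> bool) \<Rightarrow> nat \<Rightarrow> nat \<Rightarrow> bool" where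
  "block v i = (\<lambda>j. v (i, j))"

definition embed_block :: "nat \<Rightarrow> (nat \<Rightarrow> bool) \<Rightarrow> nat \<times> nat \<Rightarrow> bool" where
  "embed_block i y = (\<lambda>(k, j). k = i \<and> y j)"

definition slice :: "nat \<Rightarrow> nat \<Rightarrow> (nat \<times> nat \<Rightarrow> bool) set \<Rightarrow> (nat \<Rightarrow> bool) set" where
  "slice m i S = {y \<in> Fm m. embed_block i y \<in> S}"

lemma block_xadd: "block (xadd v w) i = xadd (block v i) (block w i)"
  by (simp add: block_def xadd_def)

lemma block_embed_block: "block (embed_block i y) k = (if k = i then y else xzero)"
  by (auto simp: embed_block_def block_def xzero_def fun_eq_iff)

lemma block_eq_xzero_iff: "block v i = xzero \<longleftrightarrow> (\<forall>j. \<not> v (i, j))"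
  by (auto simp: block_def xzero_def fun_eq_iff)

lemma block_Vsp: "v \<in> Vsp m b \<Longrightarrow> block v i \<in> Fm m"
  by (simp add: Vsp_def Fm_def block_def)

lemma block_Vsp_outside: "v \<in> Vsp m b \<Longrightarrow> b \<le> i \<Longrightarrow> block v i = xzero"
  by (auto simp: Vsp_def block_def xzero_def)

lemma embed_block_xadd: "embed_block i (xadd y z) = xadd (embed_block i y) (embed_block i z)"
  by (auto simp: embed_block_def xadd_def fun_eq_iff)

lemma embed_block_xzero [simp]: "embed_block i xzero = xzero"
  by (auto simp: embed_block_def xzero_def fun_eq_iff)

lemma embed_block_Vsp: "y \<in> Fm m \<Longrightarrow> i < b \<Longrightarrow> embed_block i y \<in> Vsp m b"
  by (auto simp: Vsp_def Fm_def embed_block_def)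

lemma Vsp_eqI:
  assumes "v \<in> Vsp m b" "w \<in> Vsp m b" "\<And>i. i < b \<Longrightarrow> block v i = block w i"
  shows "v = w"
proof -
  have "block v i = block w i" for i
    using assms by (cases "i < b") (simp_all add: block_Vsp_outside)
  then show ?thesis
    by (auto simp: block_def fun_eq_iff)
qed

lemma mem_subspace_if_blocks_mem:
  assumes v: "v \<in> Vsp m b" and S: "is_subspace A S"
    and blocks: "\<And>k. k < b \<Longrightarrow> embed_block k (block v k) \<in> S"
  shows "v \<in> S"
proof -
  define trunc where "trunc k = (\<lambda>p. fst p < k \<and> v p)" for k
  have "trunc k \<in> S" if "k \<le> b" for k
    using that
  proof (induction k)
    case 0
    have "trunc 0 = xzero"
      by (simp add: trunc_def xzero_def)
    then show ?case
      using is_subspaceD(2)[OF S] by simp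
  next
    case (Suc k)
    have "trunc (Suc k) = xadd (trunc k) (embed_block k (block v k))"
      by (auto simp: trunc_def xadd_def embed_block_def block_def fun_eq_iff less_Suc_eq)
    then show ?case
      using Suc is_subspaceD(3)[OF S] blocks by simp
  qed
  moreover have "trunc b = v"
    using v unfolding trunc_def Vsp_def by (auto simp: fun_eq_iff) (metis leI)
  ultimately show ?thesis by auto
qed

lemma slice_subset_Fm: "slice m i S \<subseteq> Fm m"
  by (auto simp: slice_def)

lemma is_subspace_slice: "is_subspace (Vsp m b) S \<Longrightarrow> is_subspace (Fm m) (slice m i S)"
  by (auto simp: is_subspace_def slice_def embed_block_xadd xadd_Fm)

definition wall_set :: "nat \<Rightarrow> nat \<Rightarrow> nat set \<Rightarrow> (nat \<times> nat \<Rightarrow> bool) set" where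
  "wall_set m b I = {v \<in> Vsp m b. \<forall>i j. i \<notin> I \<longrightarrow> \<not> v (i, j)}"

definition block_support :: "nat \<Rightarrow> (nat \<times> nat \<Rightarrow> bool) set \<Rightarrow> nat set" where
  "block_support b S = {i. i < b \<and> (\<exists>a\<in>S. block a i \<noteq> xzero)}"

lemma wall_set_empty: "wall_set m b {} = {xzero}"
  by (auto simp: wall_set_def Vsp_def xzero_def)

lemma wall_set_all: "wall_set m b {..<b} = Vsp m b"
  by (auto simp: wall_set_def Vsp_def not_less)

lemma wall_iff_wall_set:
  "wall m b W \<longleftrightarrow> (\<exists>I. I \<noteq> {} \<and> I \<subset> {..<b} \<and> W = wall_set m b I)"
  by (simp add: wall_def wall_set_def)

lemma mem_wall_set_iff:
  "v \<in> wall_set m b I \<longleftrightarrow> v \<in> Vsp m b \<and> (\<forall>i<b. i \<notin> I \<longrightarrow> block v i = xzero)"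
  unfolding wall_set_def block_eq_xzero_iff Vsp_def by (auto simp: not_less) (metis leI)

lemma subset_wall_set_block_support:
  "S \<subseteq> Vsp m b \<Longrightarrow> S \<subseteq> wall_set m b (block_support b S)"
  by (auto simp: mem_wall_set_iff block_support_def)

lemma subspace_eq_wall_set:
  assumes S: "is_subspace (Vsp m b) S"
    and full: "\<And>i. i \<in> block_support b S \<Longrightarrow> slice m i S = Fm m"
  shows "S = wall_set m b (block_support b S)"
proof
  show "S \<subseteq> wall_set m b (block_support b S)"
    using subset_wall_set_block_support is_subspaceD(1)[OF S] .
  show "wall_set m b (block_support b S) \<subseteq> S"
  proof
    fix v assume v: "v \<in> wall_set m b (block_support b S)"
    have "embed_block k (block v k) \<in> S" if "k < b" for k
    proof (cases "k \<in> block_support b S")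
      case True
      then show ?thesis
        using full v block_Vsp by (fastforce simp: slice_def mem_wall_set_iff)
    next
      case False
      then show ?thesis
        using v that is_subspaceD(2)[OF S] by (simp add: mem_wall_set_iff)
    qed
    then show "v \<in> S"
      using v S mem_subspace_if_blocks_mem by (auto simp: mem_wall_set_iff)
  qed
qed

lemma card_slice_index_two:
  assumes U: "is_subspace (Vsp m b) U" "card (Vsp m b) = 2 * card U" and i: "i < b"
  shows "2 ^ m \<le> 2 * card (slice m i U)"
proof (cases "slice m i U = Fm m")
  case True
  then show ?thesis by (simp add: card_Fm)
next
  case False
  then obtain y0 where y0: "y0 \<in> Fm m" "embed_block i y0 \<notin> U"
    by (auto simp: slice_def)
  have index_two: "xadd x y \<in> U" if "x \<in> Vsp m b - U" "y \<in> Vsp m b - U" for x y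
    using xadd_mem_index_two_subspace[OF is_subspace_Vsp finite_Vsp U(1)
        is_subspaceD(1)[OF U(1)] U(2) that] .
  have "Fm m \<subseteq> slice m i U \<union> (\<lambda>y. xadd y y0) ` slice m i U"
  proof
    fix y assume y: "y \<in> Fm m"
    show "y \<in> slice m i U \<union> (\<lambda>y. xadd y y0) ` slice m i U"
    proof (cases "embed_block i y \<in> U")
      case False
      then have "xadd y y0 \<in> slice m i U"
        using index_two y y0 embed_block_Vsp[OF _ i]
        by (simp add: slice_def embed_block_xadd xadd_Fm)
      then show ?thesis
        by (intro UnI2 image_eqI[where x="xadd y y0"]) simp_all
    qed (use y in \<open>simp add: slice_def\<close>)
  qed
  moreover have fin: "finite (slice m i U)"
    using finite_Fm by (simp add: slice_def)
  ultimately have "card (Fm m) \<le> card (slice m i U \<union> (\<lambda>y. xadd y y0) ` slice m i U)"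
    by (intro card_mono) simp_all
  also have "\<dots> \<le> card (slice m i U) + card ((\<lambda>y. xadd y y0) ` slice m i U)"
    by (rule card_Un_le)
  also have "\<dots> \<le> 2 * card (slice m i U)"
    using card_image_le[OF fin] by simp
  finally show ?thesis by (simp add: card_Fm)
qed

lemma parmap_Vsp: "parmap m b g v \<in> Vsp m b"
  by (auto simp: parmap_def Vsp_def)

locale parallel_perm =
  fixes m b :: nat and g :: "nat \<Rightarrow> (nat \<Rightarrow> bool) \<Rightarrow> nat \<Rightarrow> bool"
  assumes bij_g: "\<And>i. i < b \<Longrightarrow> bij_betw (g i) (Fm m) (Fm m)"
    and g_xzero: "\<And>i. i < b \<Longrightarrow> g i xzero = xzero"
begin

abbreviation \<gamma> :: "(nat \<times> nat \<Rightarrow> bool) \<Rightarrow> nat \<times> nat \<Rightarrow> bool" where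
  "\<gamma> \<equiv> parmap m b g"

lemma g_Fm: "i < b \<Longrightarrow> y \<in> Fm m \<Longrightarrow> g i y \<in> Fm m"
  using bij_g bij_betwE by blast

lemma image_g_Fm: "i < b \<Longrightarrow> g i ` Fm m = Fm m"
  using bij_g bij_betw_imp_surj_on by blast

lemma g_eq_iff: "i < b \<Longrightarrow> y \<in> Fm m \<Longrightarrow> z \<in> Fm m \<Longrightarrow> g i y = g i z \<longleftrightarrow> y = z"
  using bij_g by (meson bij_betw_def inj_onD)

lemma block_parmap: "v \<in> Vsp m b \<Longrightarrow> i < b \<Longrightarrow> block (\<gamma> v) i = g i (block v i)"
  using g_Fm[of i "block v i"] block_Vsp[of v m b i]
  by (auto simp: parmap_def block_def Fm_def fun_eq_iff)

lemma inj_on_parmap: "inj_on \<gamma> (Vsp m b)"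
proof (rule inj_onI)
  fix v w assume v: "v \<in> Vsp m b" and w: "w \<in> Vsp m b" and eq: "\<gamma> v = \<gamma> w"
  show "v = w"
  proof (rule Vsp_eqI[OF v w])
    fix i assume "i < b"
    then show "block v i = block w i"
      using arg_cong[OF eq, of "\<lambda>x. block x i"] block_Vsp[OF v] block_Vsp[OF w]
      by (simp add: block_parmap[OF v] block_parmap[OF w] g_eq_iff)
  qed
qed

lemma parmap_embed_block:
  "i < b \<Longrightarrow> y \<in> Fm m \<Longrightarrow> \<gamma> (embed_block i y) = embed_block i (g i y)"
  by (rule Vsp_eqI[OF parmap_Vsp embed_block_Vsp[OF g_Fm]])
    (simp_all add: block_parmap embed_block_Vsp block_embed_block g_xzero)

lemma parmap_xzero: "\<gamma> xzero = xzero"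
  using parmap_embed_block[of 0 xzero] g_xzero by (cases "b = 0") (auto simp: parmap_def xzero_def)

lemma embed_block_if_parmap_eq_embed_block:
  assumes v: "v \<in> Vsp m b" and i: "i < b" and eq: "\<gamma> v = embed_block i w"
  shows "v = embed_block i (block v i)"
proof (rule Vsp_eqI[OF v embed_block_Vsp[OF block_Vsp[OF v] i]])
  fix k assume k: "k < b"
  show "block v k = block (embed_block i (block v i)) k"
  proof (cases "k = i")
    case False
    then have "g k (block v k) = g k xzero"
      using arg_cong[OF eq, of "\<lambda>x. block x k"]
      by (simp add: block_parmap[OF v k] block_embed_block g_xzero k)
    then show ?thesis
      using False g_eq_iff[OF k block_Vsp[OF v]] by (simp add: block_embed_block)
  qed (simp add: block_embed_block)
qed

lemma parmap_image_slice:
  assumes "i < b" "S \<subseteq> Vsp m b" "\<gamma> ` S = T"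
  shows "g i ` slice m i S = slice m i T"
proof (intro set_eqI iffI)
  fix w assume "w \<in> g i ` slice m i S"
  then obtain y where y: "y \<in> Fm m" "embed_block i y \<in> S" "w = g i y"
    by (auto simp: slice_def)
  then have "embed_block i w \<in> T"
    using assms(1,3) parmap_embed_block by (metis image_eqI)
  then show "w \<in> slice m i T"
    using y g_Fm assms(1) by (simp add: slice_def)
next
  fix w assume "w \<in> slice m i T"
  then obtain v where v: "v \<in> S" "\<gamma> v = embed_block i w" "w \<in> Fm m"
    using assms(3) by (auto simp: slice_def)
  have vV: "v \<in> Vsp m b"
    using v(1) assms(2) by blast
  then have "v = embed_block i (block v i)"
    using embed_block_if_parmap_eq_embed_block assms(1) v(2) by blast
  moreover have "g i (block v i) = w"
    using arg_cong[OF v(2), of "\<lambda>x. block x i"]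
    by (simp add: block_parmap[OF vV assms(1)] block_embed_block)
  ultimately show "w \<in> g i ` slice m i S"
    using v(1) block_Vsp[OF vV] by (auto simp: slice_def)
qed

lemma parmap_second_difference_embed_block:
  assumes i: "i < b" and y: "y \<in> Fm m" and a: "a \<in> Vsp m b"
  shows "xadd (xadd (\<gamma> (xadd (embed_block i y) a)) (\<gamma> (embed_block i y))) (\<gamma> a)
    = embed_block i (xadd (xadd (g i (xadd y (block a i))) (g i y)) (g i (block a i)))"
proof (rule Vsp_eqI)
  show "xadd (xadd (\<gamma> (xadd (embed_block i y) a)) (\<gamma> (embed_block i y))) (\<gamma> a) \<in> Vsp m b"
    by (intro xadd_Vsp parmap_Vsp)
  show "embed_block i (xadd (xadd (g i (xadd y (block a i))) (g i y)) (g i (block a i))) \<in> Vsp m b"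
    using i y a by (intro embed_block_Vsp xadd_Fm g_Fm block_Vsp) auto
next
  fix k assume k: "k < b"
  have u: "embed_block i y \<in> Vsp m b"
    using embed_block_Vsp[OF y i] .
  show "block (xadd (xadd (\<gamma> (xadd (embed_block i y) a)) (\<gamma> (embed_block i y))) (\<gamma> a)) k
    = block (embed_block i (xadd (xadd (g i (xadd y (block a i))) (g i y)) (g i (block a i)))) k"
    using k by (simp add: block_xadd block_parmap u a xadd_Vsp block_embed_block g_xzero xadd_assoc)
qed


lemma parmap_wall_set: "v \<in> wall_set m b I \<Longrightarrow> \<gamma> v \<in> wall_set m b I"
  by (simp add: mem_wall_set_iff parmap_Vsp block_parmap g_xzero)

lemma mem_wall_set_if_parmap_difference:
  assumes v: "v \<in> Vsp m b" and a: "a \<in> Vsp m b"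
    and diff: "xadd (\<gamma> v) (\<gamma> (xadd v a)) \<in> wall_set m b I"
  shows "a \<in> wall_set m b I"
  unfolding mem_wall_set_iff
proof (intro conjI a allI impI)
  fix i assume i: "i < b" "i \<notin> I"
  then have "g i (block v i) = g i (xadd (block v i) (block a i))"
    using diff block_parmap v a xadd_Vsp
    by (simp add: mem_wall_set_iff block_xadd xadd_eq_xzero_iff)
  then have "block v i = xadd (block v i) (block a i)"
    using i(1) block_Vsp[OF v] block_Vsp[OF a] xadd_Fm by (simp add: g_eq_iff)
  then show "block a i = xzero"
    by (metis xadd_eq_left_iff)
qed

end

locale LA_maps_onto_L = parallel_perm +
  fixes r :: nat and U W1 W2 W :: "(nat \<times> nat \<Rightarrow> bool) set"
  assumes b_pos: "0 < b" and r_bound: "r + 2 \<le> m"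
    and diff_uniform_g: "\<And>i. i < b \<Longrightarrow> diff_uniform m (g i) (2 ^ r)"
    and anti_invariant_g: "\<And>i. i < b \<Longrightarrow> strongly_anti_invariant m (g i) r"
    and U: "is_subspace (Vsp m b) U" "sdim U = m * b - 1"
    and W1: "is_subspace (Vsp m b) W1" "W1 \<subseteq> U"
    and W2: "is_subspace (Vsp m b) W2" "W2 \<subseteq> U"
    and W: "is_subspace (Vsp m b) W" "W \<noteq> {xzero}"
    and maps: "maps_onto (parmap m b g) (LA m b U W1 W2) (Lpart m b W)"
begin

lemma card_Vsp_eq_twice_card_U: "card (Vsp m b) = 2 * card U"
proof -
  have "m * b = Suc (m * b - 1)"
    using b_pos r_bound by simp
  then show ?thesis
    using card_subspace_Vsp[OF U(1)] by (metis U(2) card_Vsp power_Suc)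
qed

definition vbar :: "nat \<times> nat \<Rightarrow> bool" where
  "vbar = (SOME x. x \<in> Vsp m b - U)"

lemma vbar_mem: "vbar \<in> Vsp m b - U"
proof -
  have "0 < card U"
    using card_subspace_Vsp[OF U(1)] by simp
  then have "card U \<noteq> card (Vsp m b)"
    using card_Vsp_eq_twice_card_U by simp
  then have "U \<noteq> Vsp m b"
    by blast
  then have "\<exists>x. x \<in> Vsp m b - U"
    using is_subspaceD(1)[OF U(1)] by blast
  then show ?thesis
    unfolding vbar_def by (rule someI_ex)
qed

lemma coset_W1_mem_LA: "u \<in> U \<Longrightarrow> coset W1 u \<in> LA m b U W1 W2"
  unfolding LA_def Let_def by blast

lemma coset_W2_mem_LA: "coset W2 vbar \<in> LA m b U W1 W2"
  unfolding LA_def Let_def vbar_def using is_subspaceD(2)[OF U(1)] coset_xzero by blast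

lemma parmap_image_LA:
  assumes "B \<in> LA m b U W1 W2"
  shows "\<exists>v. \<gamma> ` B = coset W v"
proof -
  have "\<gamma> ` B \<in> (\<lambda>X. \<gamma> ` X) ` LA m b U W1 W2"
    using assms by (rule imageI)
  then show ?thesis
    using maps by (auto simp: maps_onto_def Lpart_def)
qed

lemma xadd_parmap_mem_W:
  assumes "B \<in> LA m b U W1 W2" "x \<in> B" "y \<in> B"
  shows "xadd (\<gamma> x) (\<gamma> y) \<in> W"
  using parmap_image_LA[OF assms(1)] assms(2,3) xadd_mem_coset[OF W(1)] by blast

lemma parmap_image_W1: "\<gamma> ` W1 = W"
proof -
  have "W1 \<in> LA m b U W1 W2"
    using coset_W1_mem_LA[OF is_subspaceD(2)[OF U(1)]] by simp
  then obtain v where v: "\<gamma> ` W1 = coset W v"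
    using parmap_image_LA by blast
  have "\<gamma> xzero \<in> coset W v"
    using v is_subspaceD(2)[OF W1(1)] by blast
  then have "v \<in> W"
    by (simp add: parmap_xzero mem_coset_iff)
  then show ?thesis
    using v coset_of_mem[OF W(1)] by simp
qed

lemma card_W1: "card W1 = card W"
  using parmap_image_W1 card_image inj_on_subset[OF inj_on_parmap is_subspaceD(1)[OF W1(1)]]
  by metis

lemma card_W2: "card W2 = card W"
proof -
  obtain v where v: "\<gamma> ` coset W2 vbar = coset W v"
    using parmap_image_LA coset_W2_mem_LA by blast
  have "coset W2 vbar \<subseteq> Vsp m b"
    using is_subspaceD(1)[OF W2(1)] vbar_mem xadd_Vsp by (auto simp: coset_def)
  then have "card (\<gamma> ` coset W2 vbar) = card (coset W2 vbar)"
    using card_image inj_on_subset[OF inj_on_parmap] by blast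
  then show ?thesis
    using v by (simp add: card_coset)
qed

lemma slice_W1_full_if_large:
  assumes "i < b" "2 ^ m \<le> 2 ^ r * card (slice m i W)"
  shows "slice m i W1 = Fm m"
  using strongly_anti_invariant_full[OF anti_invariant_g is_subspace_slice[OF W1(1)]
      is_subspace_slice[OF W(1)]
      parmap_image_slice[OF _ is_subspaceD(1)[OF W1(1)] parmap_image_W1]]
    assms by blast


lemma card_slice_U_le_slice_W:
  assumes i: "i < b" and a: "a \<in> W1" "block a i \<noteq> xzero"
  shows "card (slice m i U) \<le> 2 ^ r * card (slice m i W)"
proof -
  have aV: "a \<in> Vsp m b"
    using a(1) is_subspaceD(1)[OF W1(1)] by blast
  define ai where "ai = block a i"
  have ai: "ai \<in> Fm m"
    using block_Vsp[OF aV] by (simp add: ai_def)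
  define h where "h y = xadd (g i (xadd y ai)) (g i y)" for y
  have "h ` slice m i U \<subseteq> coset (slice m i W) (g i ai)"
  proof
    fix w assume "w \<in> h ` slice m i U"
    then obtain y where y: "y \<in> Fm m" "embed_block i y \<in> U" "w = h y"
      by (auto simp: slice_def)
    have "xadd (\<gamma> (xadd (embed_block i y) a)) (\<gamma> (embed_block i y)) \<in> W"
      using xadd_parmap_mem_W[OF coset_W1_mem_LA[OF y(2)]] a(1) is_subspaceD(2)[OF W1(1)]
      by (simp add: mem_coset_iff)
    moreover have "\<gamma> a \<in> W"
      using parmap_image_W1 a(1) by blast
    ultimately have "embed_block i (xadd (h y) (g i ai)) \<in> W"
      using is_subspaceD(3)[OF W(1)] parmap_second_difference_embed_block[OF i y(1) aV]
      by (fastforce simp: h_def ai_def)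
    moreover have "xadd (h y) (g i ai) \<in> Fm m"
      using i y(1) ai by (simp add: h_def xadd_Fm g_Fm)
    ultimately show "w \<in> coset (slice m i W) (g i ai)"
      by (simp add: mem_coset_iff slice_def y(3))
  qed
  then have "card (h ` slice m i U) \<le> card (coset (slice m i W) (g i ai))"
    by (rule card_mono[rotated]) (simp add: coset_def finite_subset[OF slice_subset_Fm finite_Fm])
  then have "card (h ` slice m i U) \<le> card (slice m i W)"
    by (simp add: card_coset)
  moreover have "card (slice m i U) \<le> 2 ^ r * card (h ` slice m i U)"
    unfolding h_def using diff_uniform_card_image_derivative[OF diff_uniform_g[OF i]
        equalityD1[OF image_g_Fm[OF i]] ai a(2)[folded ai_def] slice_subset_Fm] .
  ultimately show ?thesis
    by (meson le_trans mult_le_mono2)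
qed

lemma slice_W1_nontrivial:
  assumes i: "i < b" and a: "a \<in> W1" "block a i \<noteq> xzero"
  shows "\<exists>z \<in> slice m i W1. z \<noteq> xzero"
proof -
  have "\<exists>w \<in> slice m i W. w \<noteq> xzero"
  proof (rule ccontr)
    assume "\<not> ?thesis"
    then have "card (slice m i W) \<le> 1"
      using card_mono[of "{xzero}" "slice m i W"] by fastforce
    have "(2::nat) ^ m \<le> 2 * card (slice m i U)"
      using card_slice_index_two[OF U(1) card_Vsp_eq_twice_card_U i] .
    also have "\<dots> \<le> 2 * (2 ^ r * card (slice m i W))"
      using card_slice_U_le_slice_W[OF i a] by simp
    also have "\<dots> \<le> 2 ^ Suc r"
      using \<open>card (slice m i W) \<le> 1\<close> by simp
    finally have "m \<le> Suc r"
      by (rule power_le_imp_le_exp[rotated]) simp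
    then show False
      using r_bound by simp
  qed
  then obtain w where w: "w \<in> slice m i W" "w \<noteq> xzero"
    by blast
  then obtain z where z: "z \<in> slice m i W1" "w = g i z"
    using parmap_image_slice[OF i is_subspaceD(1)[OF W1(1)] parmap_image_W1] by blast
  have "z \<noteq> xzero"
    using w(2) z(2) g_xzero[OF i] by auto
  then show ?thesis
    using z(1) by blast
qed

lemma slice_W1_full_if_nontrivial:
  assumes i: "i < b" and z: "z \<in> slice m i W1" "z \<noteq> xzero"
  shows "slice m i W1 = Fm m"
proof (rule slice_W1_full_if_large[OF i])
  have zF: "z \<in> Fm m" and zW1: "embed_block i z \<in> W1"
    using z(1) by (auto simp: slice_def)
  define h where "h y = xadd (g i (xadd y z)) (g i y)" for y
  have "h ` slice m i U \<subseteq> slice m i W - {xzero}"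
  proof
    fix w assume "w \<in> h ` slice m i U"
    then obtain y where y: "y \<in> Fm m" "embed_block i y \<in> U" "w = h y"
      by (auto simp: slice_def)
    have "xadd (\<gamma> (xadd (embed_block i y) (embed_block i z))) (\<gamma> (embed_block i y)) \<in> W"
      using xadd_parmap_mem_W[OF coset_W1_mem_LA[OF y(2)]] zW1 is_subspaceD(2)[OF W1(1)]
      by (simp add: mem_coset_iff)
    then have "embed_block i (h y) \<in> W"
      using i y(1) zF
      by (simp add: h_def parmap_embed_block xadd_Fm embed_block_xadd[symmetric])
    moreover have "h y \<noteq> xzero"
      using i y(1) zF z(2)
      by (simp add: h_def xadd_eq_xzero_iff g_eq_iff xadd_Fm xadd_eq_left_iff)
    ultimately show "w \<in> slice m i W - {xzero}"
      using i y zF by (simp add: slice_def h_def xadd_Fm g_Fm)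
  qed
  moreover have "xzero \<in> slice m i W"
    using is_subspaceD(2)[OF is_subspace_slice[OF W(1)]] .
  ultimately have image_small: "card (h ` slice m i U) < card (slice m i W)"
    using finite_subset[OF slice_subset_Fm finite_Fm] by (intro psubset_card_mono) auto
  have fibres: "card (slice m i U) \<le> 2 ^ r * card (h ` slice m i U)"
    unfolding h_def using diff_uniform_card_image_derivative[OF diff_uniform_g[OF i]
        equalityD1[OF image_g_Fm[OF i]] zF z(2) slice_subset_Fm] .
  have card_W: "card (slice m i W) = 2 ^ sdim (slice m i W)"
    using card_subspace_Fm[OF is_subspace_slice[OF W(1)]] .
  have "(2::nat) ^ m \<le> 2 * card (slice m i U)"
    using card_slice_index_two[OF U(1) card_Vsp_eq_twice_card_U i] .
  also have "\<dots> \<le> 2 * (2 ^ r * card (h ` slice m i U))"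
    using fibres by simp
  also have "\<dots> < 2 * (2 ^ r * card (slice m i W))"
    using image_small by simp
  also have "\<dots> = 2 ^ (Suc r + sdim (slice m i W))"
    using card_W by (simp add: power_add)
  finally have "m < Suc r + sdim (slice m i W)"
    by (rule power_less_imp_less_exp[rotated]) simp
  then show "2 ^ m \<le> 2 ^ r * card (slice m i W)"
    using card_W by (simp add: power_add[symmetric])
qed

lemma slice_W1_full: "i \<in> block_support b W1 \<Longrightarrow> slice m i W1 = Fm m"
  using slice_W1_nontrivial slice_W1_full_if_nontrivial by (fastforce simp: block_support_def)

lemma W1_eq_wall_set: "W1 = wall_set m b (block_support b W1)"
  using subspace_eq_wall_set[OF W1(1) slice_W1_full] .


lemma W_eq_W1: "W = W1"
proof -
  have "W \<subseteq> W1"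
    using parmap_image_W1 W1_eq_wall_set parmap_wall_set by blast
  then show ?thesis
    using card_subset_eq[OF is_subspace_finite[OF W1(1) finite_Vsp]] card_W1 by simp
qed

lemma W2_eq_W1: "W2 = W1"
proof -
  have "W2 \<subseteq> W1"
  proof
    fix a assume a: "a \<in> W2"
    have "vbar \<in> coset W2 vbar" "xadd vbar a \<in> coset W2 vbar"
      using a is_subspaceD(2)[OF W2(1)] by (simp_all add: mem_coset_iff)
    then have "xadd (\<gamma> vbar) (\<gamma> (xadd vbar a)) \<in> wall_set m b (block_support b W1)"
      using xadd_parmap_mem_W[OF coset_W2_mem_LA] W_eq_W1 W1_eq_wall_set by simp
    then show "a \<in> W1"
      using mem_wall_set_if_parmap_difference vbar_mem a is_subspaceD(1)[OF W2(1)]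
        W1_eq_wall_set
      by blast
  qed
  then show ?thesis
    using card_subset_eq[OF is_subspace_finite[OF W1(1) finite_Vsp]] card_W1 card_W2 by simp
qed

lemma wall_W1: "wall m b W1"
  unfolding wall_iff_wall_set
proof (intro exI conjI)
  show "W1 = wall_set m b (block_support b W1)"
    by (rule W1_eq_wall_set)
  show "block_support b W1 \<noteq> {}"
    using W1_eq_wall_set W_eq_W1 W(2) wall_set_empty by force
  have "W1 \<noteq> Vsp m b"
    using W1(2) vbar_mem by blast
  then show "block_support b W1 \<subset> {..<b}"
    using W1_eq_wall_set wall_set_all by (force simp: block_support_def)
qed

lemma LA_eq_Lpart: "LA m b U W1 W2 = Lpart m b W1"
proof -
  have index_two: "xadd vbar v \<in> U" if "v \<in> Vsp m b - U" for v
    using xadd_mem_index_two_subspace[OF is_subspace_Vsp finite_Vsp U(1)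
        is_subspaceD(1)[OF U(1)] card_Vsp_eq_twice_card_U vbar_mem that] .
  have "LA m b U W1 W2 = {coset W1 v | v. v \<in> U} \<union> {coset W1 (xadd vbar v) | v. v \<in> U}"
    unfolding LA_def Let_def vbar_def[symmetric] W2_eq_W1 coset_coset ..
  also have "\<dots> = {coset W1 v | v. v \<in> Vsp m b}"
  proof (intro set_eqI iffI)
    fix B assume "B \<in> {coset W1 v | v. v \<in> U} \<union> {coset W1 (xadd vbar v) | v. v \<in> U}"
    then show "B \<in> {coset W1 v | v. v \<in> Vsp m b}"
      using is_subspaceD(1)[OF U(1)] vbar_mem xadd_Vsp by blast
  next
    fix B assume "B \<in> {coset W1 v | v. v \<in> Vsp m b}"
    then obtain v where v: "v \<in> Vsp m b" "B = coset W1 v"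
      by blast
    show "B \<in> {coset W1 v | v. v \<in> U} \<union> {coset W1 (xadd vbar v) | v. v \<in> U}"
    proof (cases "v \<in> U")
      case False
      then have "B = coset W1 (xadd vbar (xadd vbar v))" "xadd vbar v \<in> U"
        using v index_two by simp_all
      then show ?thesis by blast
    qed (use v in blast)
  qed
  finally show ?thesis
    by (simp add: Lpart_def)
qed

end

theorem lemma3p10:
  fixes m b r :: nat
    and g :: "nat \<Rightarrow> (nat \<Rightarrow> bool) \<Rightarrow> (nat \<Rightarrow> bool)"
    and U W1 W2 W :: "(nat \<times> nat \<Rightarrow> bool) set"
  assumes "1 < m" and "1 < b"
    and perm: "\<forall>i<b. bij_betw (g i) (Fm m) (Fm m)"
    and zero: "parmap m b g xzero = xzero"
    and du: "\<forall>i<b. diff_uniform m (g i) (2 ^ r)"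
    and rm: "r < m - 1"
    and sai: "\<forall>i<b. strongly_anti_invariant m (g i) r"
    and U: "is_subspace (Vsp m b) U" "sdim U = m * b - 1"
    and W12: "is_subspace (Vsp m b) W1" "W1 \<subseteq> U" "is_subspace (Vsp m b) W2" "W2 \<subseteq> U"
    and W: "is_subspace (Vsp m b) W" "W \<noteq> {xzero}" "W \<noteq> Vsp m b"
    and maps: "maps_onto (parmap m b g) (LA m b U W1 W2) (Lpart m b W)"
  shows "wall m b W1 \<and> wall m b W2 \<and> wall m b W \<and> W1 = W2 \<and> W2 = W
         \<and> LA m b U W1 W2 = Lpart m b W1"
proof -
  \<comment> \<open>\<open>zero\<close> follows from \<open>sai\<close> and \<open>1 < m\<close> from \<open>rm\<close>.\<close>
  interpret LA_maps_onto_L m b g r U W1 W2 W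
    using assms by unfold_locales (auto simp: strongly_anti_invariant_def)
  show ?thesis
    using wall_W1 W_eq_W1 W2_eq_W1 LA_eq_Lpart by simp
qed

end
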